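(* Let $0=T_0<T_1<\dots<T_N=T$ be a tenor structure with constant $\Delta T=T_k-T_{k-1}$, and let $B(0,T_k)$, $k=0,\dots,N$, be initial zero-coupon bond prices such that all initial Libor rates $L(0,T_k)=\frac{1}{\Delta T}\big(\frac{B(0,T_{k-1})}{B(0,T_k)}-1\big)$, $k=1,\dots,N$, are strictly positive. Let $\Sigma$ be an affine process on $S_d^{++}$ (as in the context) and set $$\gamma_\Sigma:=\sup_{u\in\mathcal I_T\cap S_d^{--}}\mathbb E\big[e^{-\operatorname{tr}[u\Sigma_T]}\big].$$ (i) If $\gamma_\Sigma>\frac{B(0,T_1)}{B(0,T_N)}$, then there exist matrices $u_1\prec u_2\prec\dots\prec u_{N-1}\prec 0$ in $\mathcal I_T\cap S_d^{--}$, and with $u_N:=0$, such that $$M_0^{u_k}=\exp\{-\phi_T(u_k)-\operatorname{tr}[\psi_T(u_k)\Sigma_0]\}=\frac{B(0,T_k)}{B(0,T_N)}\qquad\text{for all }k\in\{1,\dots,N\}.$$ (ii) Conversely, let $u_1\prec\dots\prec u_{N-1}\prec u_N=0$ be such a sequence and let bond prices be modelled by $\frac{B(t,T_k)}{B(t,T_N)}=M^{u_k}_t$ for $t\in[0,T_k]$, $k=1,\dots,N-1$ (so that the initial condition in (i) holds). Then for every $k\in\{1,\dots,N-1\}$ and $t\in[0,T_k]$, $\frac{B(t,T_k)}{B(t,T_{k+1})}>1$ almost surely, i.e. the Libor rates $\frac1{\Delta T}\big(\frac{B(t,T_k)}{B(t,T_{k+1})}-1\big)$ are almost surely positive.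
   Context: $S_d$, $S_d^{++}$, $S_d^{--}$: real symmetric, strictly positive definite, strictly negative definite $d\times d$ matrices. For $u,v\in S_d$, $u\prec v$ means $u-v\in S_d^{--}$. $\Sigma$ is a stochastically continuous Markov process with values in $S_d^{++}$ on a filtered probability space $(\Omega,\mathcal F,(\mathcal F_t),\mathbb P)$ (here $\mathbb P$ plays the role of the terminal forward measure $\mathbb P_{T_N}$) such that for $0\le t\le s$ and every $u\in S_d$ with $\mathbb E[e^{-\operatorname{tr}[u\Sigma_s]}]<\infty$ for all $\Sigma_0\in S_d^{++}$, $\mathbb E[e^{-\operatorname{tr}[u\Sigma_s]}|\mathcal F_t]=\exp\{-\phi_{s-t}(u)-\operatorname{tr}[\psi_{s-t}(u)\Sigma_t]\}$, with deterministic $\phi$ real-valued, $\psi$ $S_d$-valued, $\phi_0(u)=0,\psi_0(u)=u$. $\mathcal I_T:=\{u\in S_d:\mathbb E[e^{-\operatorname{tr}[u\Sigma_T]}]<\infty\ \forall\Sigma_0\in S_d^{++}\}$. For $u\in\mathcal I_T$ and $t\in[0,T]$, $M^u_t:=\exp\{-\phi_{T-t}(u)-\operatorname{tr}[\psi_{T-t}(u)\Sigma_t]\}$ with $T=T_N$. *)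

theory Defs
  imports "HOL-Analysis.Analysis" "HOL-Probability.Probability" "HOL-Probability.Conditional_Expectation" "HOL-Probability.Stopping_Time"
begin

type_synonym 'd smat = "real^'d^'d"

definition sym_mat :: "'d::finite smat \<Rightarrow> bool" where
  "sym_mat A \<longleftrightarrow> transpose A = A"

definition pos_def :: "'d::finite smat \<Rightarrow> bool" where
  "pos_def A \<longleftrightarrow> sym_mat A \<and> (\<forall>x. x \<noteq> 0 \<longrightarrow> x \<bullet> (A *v x) > 0)"

definition neg_def :: "'d::finite smat \<Rightarrow> bool" where
  "neg_def A \<longleftrightarrow> sym_mat A \<and> (\<forall>x. x \<noteq> 0 \<longrightarrow> x \<bullet> (A *v x) < 0)"

definition mat_prec :: "'d::finite smat \<Rightarrow> 'd smat \<Rightarrow> bool" where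
  "mat_prec u v \<longleftrightarrow> neg_def (u - v)"

text \<open>The set I_T: symmetric u with finite exponential moment at time T for every
  initial value Sigma_0 in S_d^{++}. P x is the law of the process started at x.\<close>
definition I_set :: "('d::finite smat \<Rightarrow> 'a measure) \<Rightarrow> (real \<Rightarrow> 'a \<Rightarrow> 'd smat) \<Rightarrow> real \<Rightarrow> 'd smat set" where
  "I_set P Sig T = {u. sym_mat u \<and>
     (\<forall>y. pos_def y \<longrightarrow> integrable (P y) (\<lambda>\<omega>. exp (- trace (u ** Sig T \<omega>))))}"

definition Mproc :: "(real \<Rightarrow> 'd::finite smat \<Rightarrow> real) \<Rightarrow> (real \<Rightarrow> 'd smat \<Rightarrow> 'd smat)
    \<Rightarrow> (real \<Rightarrow> 'a \<Rightarrow> 'd smat) \<Rightarrow> real \<Rightarrow> 'd smat \<Rightarrow> real \<Rightarrow> 'a \<Rightarrow> real" where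
  "Mproc \<phi> \<psi> Sig T u t \<omega> = exp (- \<phi> (T - t) u - trace (\<psi> (T - t) u ** Sig t \<omega>))"

definition affine_process ::
  "'a measure \<Rightarrow> ('d::finite smat \<Rightarrow> 'a measure) \<Rightarrow> (real \<Rightarrow> 'a measure) \<Rightarrow> (real \<Rightarrow> 'a \<Rightarrow> 'd smat)
    \<Rightarrow> (real \<Rightarrow> 'd smat \<Rightarrow> real) \<Rightarrow> (real \<Rightarrow> 'd smat \<Rightarrow> 'd smat) \<Rightarrow> bool" where
  "affine_process \<Omega> P F Sig \<phi> \<psi> \<longleftrightarrow>
     (\<forall>x. pos_def x \<longrightarrow> prob_space (P x) \<and> sets (P x) = sets \<Omega>) \<and>
     filtration (space \<Omega>) F \<and>
     (\<forall>t\<ge>0. sets (F t) \<subseteq> sets \<Omega>) \<and>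
     (\<forall>x t. pos_def x \<longrightarrow> t \<ge> 0 \<longrightarrow> sigma_finite_subalgebra (P x) (F t)) \<and>
     (\<forall>t\<ge>0. Sig t \<in> borel_measurable (F t)) \<and>
     (\<forall>t\<ge>0. \<forall>\<omega>\<in>space \<Omega>. pos_def (Sig t \<omega>)) \<and>
     (\<forall>x. pos_def x \<longrightarrow> (AE \<omega> in P x. Sig 0 \<omega> = x)) \<and>
     \<comment> \<open>stochastic continuity\<close>
     (\<forall>x t \<epsilon>. pos_def x \<longrightarrow> t \<ge> 0 \<longrightarrow> \<epsilon> > 0 \<longrightarrow>
        ((\<lambda>s. measure (P x) {\<omega>\<in>space \<Omega>. norm (Sig s \<omega> - Sig t \<omega>) > \<epsilon>}) \<longlongrightarrow> 0)
          (at t within {0..})) \<and>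
     \<comment> \<open>Markov property\<close>
     (\<forall>x t s (f :: 'd smat \<Rightarrow> real). pos_def x \<longrightarrow> 0 \<le> t \<longrightarrow> t \<le> s \<longrightarrow>
        f \<in> borel_measurable borel \<longrightarrow> bounded (range f) \<longrightarrow>
        (AE \<omega> in P x. real_cond_exp (P x) (F t) (\<lambda>\<omega>. f (Sig s \<omega>)) \<omega> =
           real_cond_exp (P x) (vimage_algebra (space \<Omega>) (Sig t) borel) (\<lambda>\<omega>. f (Sig s \<omega>)) \<omega>)) \<and>
     \<comment> \<open>affine conditional Laplace transform\<close>
     (\<forall>x t s u. pos_def x \<longrightarrow> 0 \<le> t \<longrightarrow> t \<le> s \<longrightarrow> u \<in> I_set P Sig s \<longrightarrow>
        (AE \<omega> in P x. real_cond_exp (P x) (F t) (\<lambda>\<omega>. exp (- trace (u ** Sig s \<omega>))) \<omega> =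
           exp (- \<phi> (s - t) u - trace (\<psi> (s - t) u ** Sig t \<omega>)))) \<and>
     (\<forall>t u. sym_mat u \<longrightarrow> sym_mat (\<psi> t u)) \<and>
     (\<forall>u. \<phi> 0 u = 0 \<and> \<psi> 0 u = u)"

end

theory Submission
  imports Defs
begin

(* Calibration and Libor positivity in an affine Libor model driven by an affine process on S_d^{++}.
   (i) Pick u* \<in> I_T \<inter> S_d^{--} with E[exp(-tr(u* \<Sigma>_T))] > v_1, where v_k = B(0,T_k)/B(0,T_N).
   f(s) = E[exp(-s tr(u* \<Sigma>_T))] is continuous on [0,1] (dominated convergence) with f(0) = 1, and
   positive initial Libor rates give 1 < v_(N-1) < ... < v_1 < f(1).  The first times s_k at which
   f reaches v_k satisfy 0 < s_(N-1) < ... < s_1 \<le> 1, and u_k = s_k u* is calibrated because the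
   affine transform formula at t = 0 identifies M^u_0 with E[exp(-tr(u \<Sigma>_T))].
   (ii) tr(C S) < 0 for C negative and S positive definite (peel rank-one terms off the
   semidefinite matrix -C).  So u_k \<prec> u_(k+1) orders exp(-tr(u \<Sigma>_T)) pointwise, strict monotonicity
   of conditional expectation gives M^{u_(k+1)}_t < M^{u_k}_t a.s., and with M^0 = 1 this is
   B(t,T_k)/B(t,T_(k+1)) > 1.
   Order of the file: the matrix trace inequality, first hitting times, the scaled Laplace
   transform, consequences of the affine property, the two parts, and the theorem. *)

lemma trace_mult_sum:
  fixes A B :: "real^'n^'n"
  shows "trace (A ** B) = (\<Sum>i\<in>UNIV. \<Sum>j\<in>UNIV. A$i$j * B$j$i)"
  by (simp add: trace_def matrix_matrix_mult_def)

lemma trace_mult_scaleR: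
  fixes A S :: "real^'n^'n"
  shows "trace ((c *\<^sub>R A) ** S) = c * trace (A ** S)"
  by (simp add: trace_mult_sum sum_distrib_left mult_ac)

lemma trace_mult_diff:
  fixes A B S :: "real^'n^'n"
  shows "trace ((A - B) ** S) = trace (A ** S) - trace (B ** S)"
  by (simp add: trace_mult_sum sum_subtractf algebra_simps)

lemma quadratic_form_sum:
  fixes A :: "real^'n^'n"
  shows "x \<bullet> (A *v x) = (\<Sum>i\<in>UNIV. \<Sum>j\<in>UNIV. x$i * A$i$j * x$j)"
  by (simp add: inner_vec_def matrix_vector_mult_def sum_distrib_left mult.assoc)

lemma sym_mat_entry: "sym_mat A \<Longrightarrow> A$i$j = A$j$i"
  unfolding sym_mat_def by (metis transpose_def vec_lambda_beta)

text \<open>Symmetric positive semidefinite matrices.  They are the induction class for the trace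
  inequality below: removing a suitable rank-one term keeps a matrix semidefinite.\<close>

definition psd_mat :: "'n::finite smat \<Rightarrow> bool" where
  "psd_mat A \<longleftrightarrow> sym_mat A \<and> (\<forall>x. 0 \<le> x \<bullet> (A *v x))"

lemma pos_def_imp_psd_mat: "pos_def S \<Longrightarrow> psd_mat S"
  unfolding pos_def_def psd_mat_def by (metis inner_zero_left order_le_less)

text \<open>A zero diagonal entry of a semidefinite matrix forces its whole row to vanish; otherwise a
  combination of two unit vectors has negative quadratic form.\<close>

lemma psd_mat_zero_diagonal_row:
  fixes A :: "'n::finite smat"
  assumes "psd_mat A" "A$i$i = 0"
  shows "A$i$j = 0"
proof (rule ccontr)
  assume ne: "A$i$j \<noteq> 0"
  have sym: "A$j$i = A$i$j" using assms(1) unfolding psd_mat_def by (metis sym_mat_entry)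
  define t where "t = - (A$j$j + 1) / (2 * A$i$j)"
  have "(axis j 1 + t *\<^sub>R axis i 1) \<bullet> (A *v (axis j 1 + t *\<^sub>R axis i 1))
      = A$j$j + t * A$j$i + t * A$i$j + t * t * A$i$i"
    by (simp add: matrix_vector_right_distrib matrix_vector_mult_scaleR inner_add_left inner_add_right
        matrix_vector_mult_basis inner_axis' column_def algebra_simps)
  also have "\<dots> = -1" using ne sym assms(2) unfolding t_def by (simp add: field_simps)
  finally show False using assms(1) unfolding psd_mat_def by (metis neg_0_le_iff_le not_one_le_zero)
qed

lemma psd_mat_diagonal_nonneg:
  assumes "psd_mat A" shows "0 \<le> A$i$i"
proof -
  have "0 \<le> axis i 1 \<bullet> (A *v axis i 1)" using assms unfolding psd_mat_def by blast
  then show ?thesis by (simp add: inner_axis' matrix_vector_mult_basis column_def)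
qed

definition outer_prod :: "real^'n \<Rightarrow> real^'n^'n" where
  "outer_prod p = (\<chi> a b. p$a * p$b)"

lemma quadratic_form_outer_prod: "x \<bullet> (outer_prod p *v x) = (p \<bullet> x)\<^sup>2"
  unfolding quadratic_form_sum outer_prod_def
  by (simp add: inner_vec_def power2_eq_square sum_product sum_distrib_left mult_ac)

lemma trace_outer_prod_mult:
  fixes S :: "real^'n^'n"
  shows "trace (outer_prod p ** S) = p \<bullet> (S *v p)"
proof -
  have "trace (outer_prod p ** S) = (\<Sum>i\<in>UNIV. \<Sum>j\<in>UNIV. p$i * p$j * S$j$i)"
    by (simp add: trace_mult_sum outer_prod_def)
  also have "\<dots> = (\<Sum>j\<in>UNIV. \<Sum>i\<in>UNIV. p$j * S$j$i * p$i)"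
    by (subst sum.swap) (simp add: mult_ac)
  finally show ?thesis by (simp add: quadratic_form_sum)
qed

text \<open>One step of symmetric Gaussian elimination (Schur complement): if A is semidefinite with
  positive pivot A_ii and a is its i-th column, then A - a a^T / A_ii is semidefinite, has a zero
  i-th pivot and keeps all zero pivots of A.\<close>

lemma psd_mat_rank_one_reduction:
  fixes A :: "'n::finite smat"
  assumes psd: "psd_mat A" and pos: "0 < A$i$i"
  defines "A' \<equiv> A - (1 / A$i$i) *\<^sub>R outer_prod (column i A)"
  shows "psd_mat A'" "A'$i$i = 0" "\<And>j. A$j$j = 0 \<Longrightarrow> A'$j$j = 0"
proof -
  define p where "p = column i A"
  define d where "d = A$i$i"
  have symA: "\<And>a b. A$a$b = A$b$a" using psd unfolding psd_mat_def by (metis sym_mat_entry)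
  have A': "A' = A - (1 / d) *\<^sub>R outer_prod p" unfolding A'_def p_def d_def ..
  show "A'$i$i = 0"
    unfolding A' p_def d_def outer_prod_def column_def using pos by (simp add: power2_eq_square)
  show "A'$j$j = 0" if "A$j$j = 0" for j
    using psd_mat_zero_diagonal_row[OF psd that, of i] that symA[of i j]
    unfolding A' p_def outer_prod_def column_def by simp
  have "sym_mat A'"
    unfolding sym_mat_def A' outer_prod_def
    by (simp add: vec_eq_iff transpose_def symA mult.commute)
  moreover have "0 \<le> x \<bullet> (A' *v x)" for x
  proof -
    define y where "y = x - ((p \<bullet> x) / d) *\<^sub>R axis i 1"
    have "axis i 1 \<bullet> (A *v x) = (A *v x)$i" by (simp add: inner_axis')
    then have Ax: "axis i 1 \<bullet> (A *v x) = p \<bullet> x"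
      by (simp add: matrix_vector_mult_def p_def column_def inner_vec_def symA mult.commute)
    have xA: "x \<bullet> (A *v axis i 1) = p \<bullet> x"
      by (simp add: matrix_vector_mult_basis p_def inner_commute)
    have AA: "axis i 1 \<bullet> (A *v axis i 1) = d"
      by (simp add: matrix_vector_mult_basis column_def inner_axis' d_def)
    have "y \<bullet> (A *v y) = x \<bullet> (A *v x) - (p \<bullet> x)\<^sup>2 / d"
      unfolding y_def using pos
      by (simp add: matrix_vector_mult_diff_distrib matrix_vector_mult_scaleR inner_diff_left
          inner_diff_right Ax xA AA d_def field_simps power2_eq_square)
    moreover have "x \<bullet> (A' *v x) = x \<bullet> (A *v x) - (p \<bullet> x)\<^sup>2 / d"
      unfolding A' by (simp add: matrix_vector_mult_diff_rdistrib inner_diff_right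
          scaleR_matrix_vector_assoc[symmetric] quadratic_form_outer_prod)
    ultimately show ?thesis using psd unfolding psd_mat_def by metis
  qed
  ultimately show "psd_mat A'" unfolding psd_mat_def by blast
qed

lemma psd_mat_trace_nonneg:
  fixes A S :: "'n::finite smat"
  assumes "psd_mat A" "psd_mat S"
  shows "0 \<le> trace (A ** S)"
  using assms(1)
proof (induction "card {j. A$j$j \<noteq> 0}" arbitrary: A rule: less_induct)
  case (less A)
  show ?case
  proof (cases "\<exists>i. A$i$i \<noteq> 0")
    case False
    then have "A = 0" using psd_mat_zero_diagonal_row[OF less.prems] by (simp add: vec_eq_iff)
    then show ?thesis by (simp add: trace_def)
  next
    case True
    then obtain i where i: "A$i$i \<noteq> 0" by blast
    with psd_mat_diagonal_nonneg[OF less.prems, of i] have pos: "0 < A$i$i" by linarith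
    define A' where "A' = A - (1 / A$i$i) *\<^sub>R outer_prod (column i A)"
    note red = psd_mat_rank_one_reduction[OF less.prems pos, folded A'_def]
    have "{j. A'$j$j \<noteq> 0} \<subseteq> {j. A$j$j \<noteq> 0} - {i}" using red(2,3) by auto
    then have "card {j. A'$j$j \<noteq> 0} < card {j. A$j$j \<noteq> 0}"
      using i by (intro order_le_less_trans[OF card_mono card_Diff1_less]) auto
    then have "0 \<le> trace (A' ** S)" using less.hyps red(1) by blast
    moreover have "0 \<le> column i A \<bullet> (S *v column i A)" using assms(2) unfolding psd_mat_def by blast
    moreover have "trace (A ** S) = trace (A' ** S) + (1 / A$i$i) * (column i A \<bullet> (S *v column i A))"
      unfolding A'_def by (simp add: trace_mult_diff trace_mult_scaleR trace_outer_prod_mult)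
    ultimately show ?thesis using pos by simp
  qed
qed

text \<open>If moreover A \<noteq> 0 and S is positive definite, the first peeled-off term a^T S a is strictly
  positive.\<close>

lemma psd_mat_trace_pos:
  fixes A S :: "'n::finite smat"
  assumes A: "psd_mat A" "A \<noteq> 0" and S: "pos_def S"
  shows "0 < trace (A ** S)"
proof -
  obtain i where "A$i$i \<noteq> 0"
    using psd_mat_zero_diagonal_row[OF A(1)] A(2) by (auto simp: vec_eq_iff)
  with psd_mat_diagonal_nonneg[OF A(1), of i] have pos: "0 < A$i$i" by linarith
  define A' where "A' = A - (1 / A$i$i) *\<^sub>R outer_prod (column i A)"
  have "0 \<le> trace (A' ** S)"
    using psd_mat_trace_nonneg psd_mat_rank_one_reduction(1)[OF A(1) pos] pos_def_imp_psd_mat[OF S]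
    unfolding A'_def by blast
  moreover have "column i A $ i = A$i$i" by (simp add: column_def)
  then have "column i A \<noteq> 0" using pos by auto
  then have "0 < column i A \<bullet> (S *v column i A)" using S unfolding pos_def_def by blast
  moreover have "trace (A ** S) = trace (A' ** S) + (1 / A$i$i) * (column i A \<bullet> (S *v column i A))"
    unfolding A'_def by (simp add: trace_mult_diff trace_mult_scaleR trace_outer_prod_mult)
  ultimately show ?thesis using pos by (simp add: add_nonneg_pos)
qed

lemma neg_def_scaleR: "neg_def u \<Longrightarrow> 0 < c \<Longrightarrow> neg_def (c *\<^sub>R u)"
  unfolding neg_def_def sym_mat_def
  by (simp add: transpose_scalar scaleR_matrix_vector_assoc[symmetric] mult_pos_neg)

text \<open>The key matrix fact: tr(C S) < 0 for C \<in> S_d^{--} and S \<in> S_d^{++}.  It makes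
  u \<mapsto> exp(-tr(u S)) strictly decreasing for the order \<prec>.\<close>

lemma neg_def_trace_neg:
  fixes C S :: "'n::finite smat"
  assumes C: "neg_def C" and S: "pos_def S"
  shows "trace (C ** S) < 0"
proof -
  have "psd_mat (- C)"
    unfolding psd_mat_def
  proof (intro conjI allI)
    show "sym_mat (- C)"
      using C unfolding neg_def_def sym_mat_def by (simp add: transpose_def vec_eq_iff)
    fix x :: "real^'n"
    have "x \<bullet> ((- C) *v x) = - (x \<bullet> (C *v x))" by (simp add: quadratic_form_sum sum_negf)
    then show "0 \<le> x \<bullet> ((- C) *v x)"
      using C unfolding neg_def_def by (cases "x = 0") (auto simp: less_imp_le)
  qed
  moreover have "- C \<noteq> 0"
  proof
    assume "- C = 0"
    then have "axis undefined 1 \<bullet> (C *v axis undefined 1) = (0::real)" by simp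
    moreover have "axis undefined 1 \<bullet> (C *v axis undefined 1) < (0::real)"
      using C unfolding neg_def_def by (simp add: axis_eq_0_iff)
    ultimately show False by simp
  qed
  ultimately have "0 < trace ((- C) ** S)" using psd_mat_trace_pos S by blast
  then show ?thesis by (simp add: trace_mult_sum sum_negf)
qed

definition first_hit :: "real \<Rightarrow> real \<Rightarrow> (real \<Rightarrow> real) \<Rightarrow> real \<Rightarrow> real" where
  "first_hit a b f c = Inf {s \<in> {a..b}. f s = c}"

lemma first_hit_attained:
  assumes cont: "continuous_on {a..b} f" and "a \<le> b" "f a < c" "c \<le> f b"
  shows "a < first_hit a b f c" "first_hit a b f c \<le> b" "f (first_hit a b f c) = c"
proof -
  let ?Z = "{s \<in> {a..b}. f s = c}"
  have "?Z \<noteq> {}" using IVT'[of f a c b] assms by auto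
  moreover have "bdd_below ?Z" by (rule bdd_belowI[of _ a]) auto
  moreover have "closed ?Z" by (rule continuous_closed_preimage_constant[OF cont closed_atLeastAtMost])
  ultimately have "first_hit a b f c \<in> ?Z" unfolding first_hit_def by (rule closed_contains_Inf)
  then show "first_hit a b f c \<le> b" "f (first_hit a b f c) = c" "a < first_hit a b f c"
    using assms(3) by (auto simp: order_le_less)
qed

text \<open>A lower level is reached strictly earlier than a higher one; this orders the calibrated
  scalings in part (i).\<close>

lemma first_hit_strict_mono:
  assumes cont: "continuous_on {a..b} f" and "a \<le> b" "f a < c'" "c' < c" "c \<le> f b"
  shows "first_hit a b f c' < first_hit a b f c"
proof -
  let ?s = "first_hit a b f c"
  have "f a < c" using assms by simp
  note hit = first_hit_attained[OF cont assms(2) this assms(5)]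
  have "continuous_on {a..?s} f" by (rule continuous_on_subset[OF cont]) (use hit(2) in auto)
  then obtain \<sigma> where \<sigma>: "a \<le> \<sigma>" "\<sigma> \<le> ?s" "f \<sigma> = c'"
    using IVT'[of f a c' ?s] hit assms by auto
  have "first_hit a b f c' \<le> \<sigma>"
    unfolding first_hit_def using \<sigma> hit(2) by (intro cInf_lower) (auto intro: bdd_belowI[of _ a])
  moreover have "\<sigma> \<noteq> ?s" using \<sigma>(3) hit(3) assms by auto
  ultimately show ?thesis using \<sigma>(2) by simp
qed

text \<open>For s \<in> [0,1], exp(-s g) \<le> 1 + exp(-g): the dominating function for the scaled transform.\<close>

lemma exp_scaled_le:
  fixes g s :: real
  assumes "0 \<le> s" "s \<le> 1"
  shows "exp (- (s * g)) \<le> 1 + exp (- g)"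
proof (cases "0 \<le> g")
  case True
  then have "exp (- (s * g)) \<le> 1" using assms by simp
  then show ?thesis using exp_gt_zero[of "- g"] by linarith
next
  case False
  then have "(1 - s) * g \<le> 0" using assms by (simp add: mult_nonneg_nonpos)
  then have "- (s * g) \<le> - g" by (simp add: algebra_simps)
  then have "exp (- (s * g)) \<le> exp (- g)" by simp
  then show ?thesis by linarith
qed

text \<open>Measurability of exp(-s g) follows from that of exp(-g), as exp(-s g) = exp(-g) powr s.\<close>

lemma exp_scaled_measurable:
  fixes g :: "'a \<Rightarrow> real"
  assumes [measurable]: "(\<lambda>\<omega>. exp (- g \<omega>)) \<in> borel_measurable M"
  shows "(\<lambda>\<omega>. exp (- (s * g \<omega>))) \<in> borel_measurable M"
proof -
  have "(\<lambda>\<omega>. exp (- g \<omega>) powr s) \<in> borel_measurable M" by measurable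
  moreover have "exp (- g \<omega>) powr s = exp (- (s * g \<omega>))" for \<omega> by (simp add: powr_def)
  ultimately show ?thesis by simp
qed

lemma integrable_exp_scaled:
  fixes g :: "'a \<Rightarrow> real"
  assumes fin: "finite_measure M" and int: "integrable M (\<lambda>\<omega>. exp (- g \<omega>))"
    and "0 \<le> s" "s \<le> 1"
  shows "integrable M (\<lambda>\<omega>. exp (- (s * g \<omega>)))"
proof (rule Bochner_Integration.integrable_bound)
  show "integrable M (\<lambda>\<omega>. 1 + exp (- g \<omega>))"
    by (rule Bochner_Integration.integrable_add[OF finite_measure.integrable_const[OF fin] int])
  show "(\<lambda>\<omega>. exp (- (s * g \<omega>))) \<in> borel_measurable M"
    using int by (intro exp_scaled_measurable) auto
  show "AE \<omega> in M. norm (exp (- (s * g \<omega>))) \<le> norm (1 + exp (- g \<omega>))"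
    using exp_scaled_le[OF assms(3,4)] by (simp add: add_pos_pos)
qed

lemma continuous_on_exp_scaled_integral:
  fixes g :: "'a \<Rightarrow> real"
  assumes fin: "finite_measure M" and int: "integrable M (\<lambda>\<omega>. exp (- g \<omega>))"
  shows "continuous_on {0..1} (\<lambda>s. \<integral>\<omega>. exp (- (s * g \<omega>)) \<partial>M)"
proof (rule continuous_on_sequentiallyI)
  fix s :: "nat \<Rightarrow> real" and a
  assume s: "\<forall>n. s n \<in> {0..1}" "a \<in> {0..1}" "s \<longlonglongrightarrow> a"
  have meas: "(\<lambda>\<omega>. exp (- (r * g \<omega>))) \<in> borel_measurable M" for r
    using int by (intro exp_scaled_measurable) auto
  show "(\<lambda>n. \<integral>\<omega>. exp (- (s n * g \<omega>)) \<partial>M) \<longlonglongrightarrow> \<integral>\<omega>. exp (- (a * g \<omega>)) \<partial>M"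
  proof (rule integral_dominated_convergence[where w="\<lambda>\<omega>. 1 + exp (- g \<omega>)"])
    show "integrable M (\<lambda>\<omega>. 1 + exp (- g \<omega>))"
      by (rule Bochner_Integration.integrable_add[OF finite_measure.integrable_const[OF fin] int])
    show "AE \<omega> in M. (\<lambda>n. exp (- (s n * g \<omega>))) \<longlonglongrightarrow> exp (- (a * g \<omega>))"
      using s(3) by (intro AE_I2 tendsto_intros)
    show "AE \<omega> in M. norm (exp (- (s n * g \<omega>))) \<le> 1 + exp (- g \<omega>)" for n
      using exp_scaled_le s(1) by auto
  qed (rule meas)+
qed

lemma affine_prob_space_sets:
  assumes "affine_process \<Omega> P F Sig \<phi> \<psi>" "pos_def x"
  shows "prob_space (P x) \<and> sets (P x) = sets \<Omega>"
proof -
  have "\<forall>x. pos_def x \<longrightarrow> prob_space (P x) \<and> sets (P x) = sets \<Omega>"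
    using assms(1) unfolding affine_process_def by (elim conjE) assumption
  then show ?thesis using assms(2-) by blast
qed

lemma affine_subalgebra:
  assumes "affine_process \<Omega> P F Sig \<phi> \<psi>" "pos_def x" "0 \<le> t"
  shows "sigma_finite_subalgebra (P x) (F t)"
proof -
  have "\<forall>x t. pos_def x \<longrightarrow> 0 \<le> t \<longrightarrow> sigma_finite_subalgebra (P x) (F t)"
    using assms(1) unfolding affine_process_def by (elim conjE) assumption
  then show ?thesis using assms(2-) by blast
qed

lemma affine_pos_def:
  assumes "affine_process \<Omega> P F Sig \<phi> \<psi>" "0 \<le> t" "\<omega> \<in> space \<Omega>"
  shows "pos_def (Sig t \<omega>)"
proof -
  have "\<forall>t\<ge>0. \<forall>\<omega>\<in>space \<Omega>. pos_def (Sig t \<omega>)"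
    using assms(1) unfolding affine_process_def by (elim conjE) assumption
  then show ?thesis using assms(2-) by blast
qed

lemma affine_initial:
  assumes "affine_process \<Omega> P F Sig \<phi> \<psi>" "pos_def x"
  shows "AE \<omega> in P x. Sig 0 \<omega> = x"
proof -
  have "\<forall>x. pos_def x \<longrightarrow> (AE \<omega> in P x. Sig 0 \<omega> = x)"
    using assms(1) unfolding affine_process_def by (elim conjE) assumption
  then show ?thesis using assms(2-) by blast
qed

lemma affine_laplace:
  assumes "affine_process \<Omega> P F Sig \<phi> \<psi>" "pos_def x" "0 \<le> t" "t \<le> s" "u \<in> I_set P Sig s"
  shows "AE \<omega> in P x. real_cond_exp (P x) (F t) (\<lambda>\<omega>. exp (- trace (u ** Sig s \<omega>))) \<omega> =
      exp (- \<phi> (s - t) u - trace (\<psi> (s - t) u ** Sig t \<omega>))"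
proof -
  have "\<forall>x t s u. pos_def x \<longrightarrow> 0 \<le> t \<longrightarrow> t \<le> s \<longrightarrow> u \<in> I_set P Sig s \<longrightarrow>
      (AE \<omega> in P x. real_cond_exp (P x) (F t) (\<lambda>\<omega>. exp (- trace (u ** Sig s \<omega>))) \<omega> =
        exp (- \<phi> (s - t) u - trace (\<psi> (s - t) u ** Sig t \<omega>)))"
    using assms(1) unfolding affine_process_def by (elim conjE) assumption
  then show ?thesis using assms(2-) by blast
qed

lemma affine_finite_measure:
  assumes "affine_process \<Omega> P F Sig \<phi> \<psi>" "pos_def y"
  shows "finite_measure (P y)"
  using affine_prob_space_sets[OF assms] prob_space.finite_measure by blast

lemma affine_space_eq:
  assumes "affine_process \<Omega> P F Sig \<phi> \<psi>" "pos_def x"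
  shows "space (P x) = space \<Omega>"
  using affine_prob_space_sets[OF assms] sets_eq_imp_space_eq by blast

lemma I_set_scaleR:
  assumes fin: "\<And>y. pos_def y \<Longrightarrow> finite_measure (P y)"
    and u: "u \<in> I_set P Sig T" and s: "0 \<le> s" "s \<le> 1"
  shows "s *\<^sub>R u \<in> I_set P Sig T"
proof -
  have "sym_mat (s *\<^sub>R u)" using u unfolding I_set_def sym_mat_def by (simp add: transpose_scalar)
  moreover have "integrable (P y) (\<lambda>\<omega>. exp (- trace ((s *\<^sub>R u) ** Sig T \<omega>)))" if "pos_def y" for y
    using integrable_exp_scaled[OF fin[OF that] _ s, of "\<lambda>\<omega>. trace (u ** Sig T \<omega>)"] u that
    unfolding I_set_def by (simp add: trace_mult_scaleR)
  ultimately show ?thesis unfolding I_set_def by blast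
qed

lemma zero_in_I_set:
  fixes P :: "'d::finite smat \<Rightarrow> 'a measure"
  assumes fin: "\<And>y. pos_def y \<Longrightarrow> finite_measure (P y)"
  shows "0 \<in> I_set P Sig T"
proof -
  have "sym_mat (0 :: 'd::finite smat)" unfolding sym_mat_def by (simp add: transpose_def vec_eq_iff)
  moreover have "integrable (P y) (\<lambda>\<omega>. exp (- trace ((0 :: 'd smat) ** Sig T \<omega>)))" if "pos_def y" for y
    using finite_measure.integrable_const[OF fin[OF that]] by (simp add: trace_def)
  ultimately show ?thesis unfolding I_set_def by blast
qed

lemma initial_laplace_transform:
  assumes aff: "affine_process \<Omega> P F Sig \<phi> \<psi>" and x: "pos_def x"
    and T: "0 \<le> T" and u: "u \<in> I_set P Sig T"
  shows "(\<integral>\<omega>. exp (- trace (u ** Sig T \<omega>)) \<partial>P x) = exp (- \<phi> T u - trace (\<psi> T u ** x))"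
proof -
  interpret sigma_finite_subalgebra "P x" "F 0" using affine_subalgebra[OF aff x] by simp
  interpret prob_space "P x" using affine_prob_space_sets[OF aff x] by simp
  let ?E = "\<lambda>\<omega>. exp (- trace (u ** Sig T \<omega>))"
  have int: "integrable (P x) ?E" using u x unfolding I_set_def by blast
  have ae: "AE \<omega> in P x. real_cond_exp (P x) (F 0) ?E \<omega> = exp (- \<phi> T u - trace (\<psi> T u ** x))"
    using affine_laplace[OF aff x order_refl T u] affine_initial[OF aff x] by eventually_elim simp
  have "(\<integral>\<omega>. ?E \<omega> \<partial>P x) = (\<integral>\<omega>. real_cond_exp (P x) (F 0) ?E \<omega> \<partial>P x)"
    using real_cond_exp_int(2)[OF int] by simp
  also have "\<dots> = (\<integral>\<omega>. exp (- \<phi> T u - trace (\<psi> T u ** x)) \<partial>P x)"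
    by (rule integral_cong_AE)
      (use ae real_cond_exp_int(1)[OF int] in \<open>auto intro: borel_measurable_integrable\<close>)
  also have "\<dots> = exp (- \<phi> T u - trace (\<psi> T u ** x))" by (simp add: prob_space)
  finally show ?thesis .
qed

lemma Mproc_cond_exp:
  assumes aff: "affine_process \<Omega> P F Sig \<phi> \<psi>" and "pos_def x" "0 \<le> t" "t \<le> T"
    and "u \<in> I_set P Sig T"
  shows "AE \<omega> in P x. real_cond_exp (P x) (F t) (\<lambda>\<omega>. exp (- trace (u ** Sig T \<omega>))) \<omega>
           = Mproc \<phi> \<psi> Sig T u t \<omega>"
  using affine_laplace[OF assms] unfolding Mproc_def .

text \<open>Strict monotonicity of M^u in u: if u \<prec> v then M^v_t < M^u_t almost surely, by the trace
  inequality and strict monotonicity of conditional expectation.\<close>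

lemma Mproc_strict_mono:
  assumes aff: "affine_process \<Omega> P F Sig \<phi> \<psi>" and x: "pos_def x" and t: "0 \<le> t" "t \<le> T"
    and u: "u \<in> I_set P Sig T" and v: "v \<in> I_set P Sig T" and prec: "mat_prec u v"
  shows "AE \<omega> in P x. Mproc \<phi> \<psi> Sig T v t \<omega> < Mproc \<phi> \<psi> Sig T u t \<omega>"
proof -
  interpret sigma_finite_subalgebra "P x" "F t" using affine_subalgebra[OF aff x t(1)] .
  have "AE \<omega> in P x. exp (- trace (v ** Sig T \<omega>)) < exp (- trace (u ** Sig T \<omega>))"
  proof (rule AE_I2)
    fix \<omega> assume "\<omega> \<in> space (P x)"
    then have "pos_def (Sig T \<omega>)"
      using affine_pos_def[OF aff] affine_space_eq[OF aff x] t by simp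
    then have "trace ((u - v) ** Sig T \<omega>) < 0"
      using neg_def_trace_neg prec unfolding mat_prec_def by blast
    then show "exp (- trace (v ** Sig T \<omega>)) < exp (- trace (u ** Sig T \<omega>))"
      by (simp add: trace_mult_diff)
  qed
  then have "AE \<omega> in P x. real_cond_exp (P x) (F t) (\<lambda>\<omega>. exp (- trace (v ** Sig T \<omega>))) \<omega>
      < real_cond_exp (P x) (F t) (\<lambda>\<omega>. exp (- trace (u ** Sig T \<omega>))) \<omega>"
    using u v x unfolding I_set_def by (intro real_cond_exp_mono_strict) auto
  then show ?thesis using Mproc_cond_exp[OF aff x t u] Mproc_cond_exp[OF aff x t v] by eventually_elim simp
qed

lemma Mproc_zero:
  assumes aff: "affine_process \<Omega> P F Sig \<phi> \<psi>" and x: "pos_def x" and t: "0 \<le> t" "t \<le> T"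
  shows "AE \<omega> in P x. Mproc \<phi> \<psi> Sig T 0 t \<omega> = 1"
proof -
  interpret sigma_finite_subalgebra "P x" "F t" using affine_subalgebra[OF aff x t(1)] .
  interpret prob_space "P x" using affine_prob_space_sets[OF aff x] by simp
  have zero: "0 \<in> I_set P Sig T" by (rule zero_in_I_set) (rule affine_finite_measure[OF aff])
  have const: "(\<lambda>\<omega>. exp (- trace (0 ** Sig T \<omega>))) = (\<lambda>\<omega>. 1)" by (simp add: trace_def)
  have "AE \<omega> in P x. real_cond_exp (P x) (F t) (\<lambda>\<omega>. exp (- trace (0 ** Sig T \<omega>))) \<omega> = 1"
    unfolding const by (intro real_cond_exp_F_meas) auto
  then show ?thesis using Mproc_cond_exp[OF aff x t zero] by eventually_elim simp
qed

lemma strictly_decreasing_from_steps: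
  fixes b :: "nat \<Rightarrow> real"
  assumes step: "\<And>k. Suc k \<le> N \<Longrightarrow> b (Suc k) < b k"
  shows "i < j \<Longrightarrow> j \<le> N \<Longrightarrow> b j < b i"
proof (induction j)
  case (Suc j)
  have "b (Suc j) < b j" using step Suc.prems(2) .
  moreover have "i < j \<Longrightarrow> b j < b i" using Suc.IH Suc.prems(2) by simp
  ultimately show ?case using Suc.prems(1) by (cases "i = j") auto
qed simp

lemma positive_libor_bonds_decreasing:
  fixes B0 :: "nat \<Rightarrow> real"
  assumes pos: "\<forall>k\<le>N. B0 k > 0" and dT: "\<Delta>T > 0"
    and libor: "\<forall>k\<in>{1..N}. (B0 (k - 1) / B0 k - 1) / \<Delta>T > 0"
    and ij: "i < j" "j \<le> N"
  shows "B0 j < B0 i"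
proof (rule strictly_decreasing_from_steps[OF _ ij])
  fix k assume k: "Suc k \<le> N"
  have "0 < (B0 (Suc k - 1) / B0 (Suc k) - 1) / \<Delta>T" using libor[rule_format, of "Suc k"] k by simp
  then have "1 < B0 k / B0 (Suc k)" using dT by (simp add: zero_less_divide_iff)
  moreover have "0 < B0 (Suc k)" using pos k by simp
  ultimately show "B0 (Suc k) < B0 k" by (simp add: less_divide_eq_1_pos)
qed

lemma ratio_gt_one_from_normalized:
  fixes a b n :: real
  assumes "0 < b" "0 < n" "b / n < a / n"
  shows "1 < a / b"
proof -
  have "b < a" using assms(2,3) by (simp add: divide_less_cancel)
  then show ?thesis using assms(1) by (simp add: less_divide_eq_1_pos)
qed

text \<open>Part (i), for arbitrary strictly decreasing targets v_1 > ... > v_N = 1: scale a matrix whose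
  transform exceeds v_1 by the first times s_k at which the scaled transform reaches v_k.\<close>

lemma calibrated_parameters_exist:
  fixes P :: "'d::finite smat \<Rightarrow> 'a measure" and v :: "nat \<Rightarrow> real"
  assumes aff: "affine_process \<Omega> P F Sig \<phi> \<psi>" and x0: "pos_def x0" and T: "0 \<le> T"
    and v_dec: "\<And>i j. 1 \<le> i \<Longrightarrow> i < j \<Longrightarrow> j \<le> N \<Longrightarrow> v j < v i" and vN: "v N = 1"
    and sup: "ereal (v 1) <
      (\<Squnion>u\<in>I_set P Sig T \<inter> {u. neg_def u}. ereal (\<integral>\<omega>. exp (- trace (u ** Sig T \<omega>)) \<partial>P x0))"
  shows "\<exists>u. (\<forall>k\<in>{1..<N}. u k \<in> I_set P Sig T \<and> neg_def (u k)) \<and> u N = 0 \<and>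
      (\<forall>k\<in>{1..<N}. mat_prec (u k) (u (Suc k))) \<and>
      (\<forall>k\<in>{1..N}. exp (- \<phi> T (u k) - trace (\<psi> T (u k) ** x0)) = v k)"
proof -
  obtain us where us: "us \<in> I_set P Sig T" "neg_def us"
    and gt: "v 1 < (\<integral>\<omega>. exp (- trace (us ** Sig T \<omega>)) \<partial>P x0)"
    using sup unfolding less_SUP_iff by auto
  have fin: "\<And>y. pos_def y \<Longrightarrow> finite_measure (P y)" using affine_finite_measure[OF aff] .
  define f where "f r = (\<integral>\<omega>. exp (- (r * trace (us ** Sig T \<omega>))) \<partial>P x0)" for r
  define s where "s k = first_hit 0 1 f (v k)" for k
  define u where "u k = (if k = N then 0 else s k *\<^sub>R us)" for k
  have cont: "continuous_on {0..1} f"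
    unfolding f_def using us(1) x0 fin[OF x0] unfolding I_set_def
    by (intro continuous_on_exp_scaled_integral) auto
  have f0: "f 0 < v k" if "k \<in> {1..<N}" for k
    using affine_prob_space_sets[OF aff x0] v_dec[of k N] vN that by (simp add: f_def prob_space.prob_space)
  have f1: "v k \<le> f 1" if "k \<in> {1..<N}" for k
    using gt v_dec[of 1 k] that by (cases "k = 1") (auto simp: f_def)
  have hit: "0 < s k \<and> s k \<le> 1 \<and> f (s k) = v k" if "k \<in> {1..<N}" for k
    using first_hit_attained[OF cont _ f0[OF that] f1[OF that]] unfolding s_def by simp
  have uI: "u k \<in> I_set P Sig T \<and> neg_def (u k)" if "k \<in> {1..<N}" for k
    using I_set_scaleR[OF fin us(1)] neg_def_scaleR[OF us(2)] hit[OF that] that by (simp add: u_def)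
  have prec: "mat_prec (u k) (u (Suc k))" if k: "k \<in> {1..<N}" for k
  proof (cases "Suc k = N")
    case True
    then show ?thesis using uI[OF k] by (simp add: mat_prec_def u_def)
  next
    case False
    then have "s (Suc k) < s k"
      unfolding s_def using k v_dec[of k "Suc k"] f0[of "Suc k"] f1[OF k]
      by (intro first_hit_strict_mono[OF cont]) auto
    moreover have "u k - u (Suc k) = (s k - s (Suc k)) *\<^sub>R us" using k False by (simp add: u_def scaleR_diff_left)
    ultimately show ?thesis unfolding mat_prec_def using neg_def_scaleR[OF us(2)] by simp
  qed
  have calib: "exp (- \<phi> T (u k) - trace (\<psi> T (u k) ** x0)) = v k" if k: "k \<in> {1..N}" for k
  proof (cases "k = N")
    case True
    have "0 \<in> I_set P Sig T" by (rule zero_in_I_set) (rule fin)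
    from initial_laplace_transform[OF aff x0 T this] show ?thesis
      using True vN affine_prob_space_sets[OF aff x0] by (simp add: u_def trace_def prob_space.prob_space)
  next
    case False
    then have "k \<in> {1..<N}" using k by simp
    from initial_laplace_transform[OF aff x0 T uI[OF this, THEN conjunct1]] show ?thesis
      using hit[OF \<open>k \<in> {1..<N}\<close>] False by (simp add: u_def f_def trace_mult_scaleR)
  qed
  show ?thesis using uI prec calib by (intro exI[of _ u]) (simp add: u_def)
qed

text \<open>Part (ii): B(t,T_k)/B(t,T_(k+1)) = M^{u_k}_t / M^{u_(k+1)}_t almost surely (with M^0 = 1), which
  exceeds 1 because u_k \<prec> u_(k+1).\<close>

lemma libor_rates_positive:
  fixes P :: "'d::finite smat \<Rightarrow> 'a measure" and B :: "real \<Rightarrow> nat \<Rightarrow> 'a \<Rightarrow> real"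
  assumes aff: "affine_process \<Omega> P F Sig \<phi> \<psi>" and x0: "pos_def x0"
    and Tn_mono: "\<And>i j. i \<le> j \<Longrightarrow> j \<le> N \<Longrightarrow> Tn i \<le> Tn j" and TN: "T = Tn N"
    and uI: "\<forall>k\<in>{1..<N}. u k \<in> I_set P Sig T" and uN: "u N = 0"
    and prec: "\<forall>k\<in>{1..<N}. mat_prec (u k) (u (Suc k))"
    and Bpos: "\<forall>k\<in>{1..N}. \<forall>t\<in>{0..Tn k}. \<forall>\<omega>\<in>space \<Omega>. B t k \<omega> > 0"
    and Bratio: "\<forall>k\<in>{1..<N}. \<forall>t\<in>{0..Tn k}. \<forall>\<omega>\<in>space \<Omega>.
      B t k \<omega> / B t N \<omega> = Mproc \<phi> \<psi> Sig T (u k) t \<omega>"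
    and k: "k \<in> {1..<N}" and t: "t \<in> {0..Tn k}"
  shows "AE \<omega> in P x0. B t k \<omega> / B t (Suc k) \<omega> > 1"
proof -
  have t_le: "0 \<le> t" "t \<le> T" "t \<le> Tn (Suc k)" using t k Tn_mono[of k N] Tn_mono[of k "Suc k"] TN by auto
  have BN: "\<forall>\<omega>\<in>space \<Omega>. 0 < B t N \<omega>" using Bpos k t_le TN by auto
  have space: "AE \<omega> in P x0. \<omega> \<in> space \<Omega>" using affine_space_eq[OF aff x0] AE_space by metis
  have I_j: "u j \<in> I_set P Sig T" if "j = k \<or> j = Suc k" for j
    using that k uI uN zero_in_I_set[of P] affine_finite_measure[OF aff] by (cases "j = N") auto
  have ratio: "AE \<omega> in P x0. B t j \<omega> / B t N \<omega> = Mproc \<phi> \<psi> Sig T (u j) t \<omega>" if "j = k \<or> j = Suc k" for j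
  proof (cases "j = N")
    case True
    have "AE \<omega> in P x0. \<omega> \<in> space \<Omega> \<and> Mproc \<phi> \<psi> Sig T 0 t \<omega> = 1"
      using space Mproc_zero[OF aff x0 t_le(1,2)] by eventually_elim simp
    then show ?thesis
      by eventually_elim (use True uN BN in auto)
  next
    case False
    show ?thesis using space by eventually_elim (use False that k t t_le Bratio in auto)
  qed
  have "AE \<omega> in P x0. Mproc \<phi> \<psi> Sig T (u (Suc k)) t \<omega> < Mproc \<phi> \<psi> Sig T (u k) t \<omega>"
    using prec k I_j by (intro Mproc_strict_mono[OF aff x0 t_le(1,2)]) auto
  with ratio[OF disjI1[OF refl]] ratio[OF disjI2[OF refl]] space show ?thesis
  proof eventually_elim
    case (elim \<omega>)
    have "0 < B t (Suc k) \<omega>" using Bpos k t_le elim by auto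
    moreover have "0 < B t N \<omega>" using BN elim by blast
    ultimately show ?case using elim by (intro ratio_gt_one_from_normalized[where n = "B t N \<omega>"]) auto
  qed
qed

theorem mainTheorem2:
  fixes \<Omega> :: "'a measure" and P :: "'d::finite smat \<Rightarrow> 'a measure"
    and F :: "real \<Rightarrow> 'a measure" and Sig :: "real \<Rightarrow> 'a \<Rightarrow> 'd smat"
    and \<phi> :: "real \<Rightarrow> 'd smat \<Rightarrow> real" and \<psi> :: "real \<Rightarrow> 'd smat \<Rightarrow> 'd smat"
    and x0 :: "'d smat"
    and N :: nat and Tn :: "nat \<Rightarrow> real" and T \<Delta>T :: real and B0 :: "nat \<Rightarrow> real"
  assumes aff: "affine_process \<Omega> P F Sig \<phi> \<psi>"
    and x0: "pos_def x0"
    and N: "N \<ge> 1"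
    and dT: "\<Delta>T > 0"
    and tenor: "\<forall>k\<le>N. Tn k = real k * \<Delta>T"
    and TN: "T = Tn N"
    and B0pos: "\<forall>k\<le>N. B0 k > 0"
    and libor0: "\<forall>k\<in>{1..N}. (B0 (k - 1) / B0 k - 1) / \<Delta>T > 0"
  shows
    "((\<Squnion>u\<in>I_set P Sig T \<inter> {u. neg_def u}. ereal (integral\<^sup>L (P x0) (\<lambda>\<omega>. exp (- trace (u ** Sig T \<omega>)))))
        > ereal (B0 1 / B0 N) \<longrightarrow>
      (\<exists>u :: nat \<Rightarrow> 'd smat.
         (\<forall>k\<in>{1..<N}. u k \<in> I_set P Sig T \<and> neg_def (u k)) \<and>
         u N = 0 \<and>
         (\<forall>k\<in>{1..<N}. mat_prec (u k) (u (Suc k))) \<and>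
         (\<forall>k\<in>{1..N}. exp (- \<phi> T (u k) - trace (\<psi> T (u k) ** x0)) = B0 k / B0 N)))
     \<and>
     (\<forall>(u :: nat \<Rightarrow> 'd smat) (B :: real \<Rightarrow> nat \<Rightarrow> 'a \<Rightarrow> real).
        (\<forall>k\<in>{1..<N}. u k \<in> I_set P Sig T \<and> neg_def (u k)) \<and>
        u N = 0 \<and>
        (\<forall>k\<in>{1..<N}. mat_prec (u k) (u (Suc k))) \<and>
        (\<forall>k\<in>{1..N}. exp (- \<phi> T (u k) - trace (\<psi> T (u k) ** x0)) = B0 k / B0 N) \<and>
        (\<forall>k\<in>{1..N}. \<forall>t\<in>{0..Tn k}. \<forall>\<omega>\<in>space \<Omega>. B t k \<omega> > 0) \<and>
        (\<forall>k\<in>{1..<N}. \<forall>t\<in>{0..Tn k}. \<forall>\<omega>\<in>space \<Omega>.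
           B t k \<omega> / B t N \<omega> = Mproc \<phi> \<psi> Sig T (u k) t \<omega>)
        \<longrightarrow>
        (\<forall>k\<in>{1..<N}. \<forall>t\<in>{0..Tn k}. AE \<omega> in P x0. B t k \<omega> / B t (Suc k) \<omega> > 1))"
proof -
  have T: "0 \<le> T" using TN tenor dT by simp
  have Tn_mono: "\<And>i j. i \<le> j \<Longrightarrow> j \<le> N \<Longrightarrow> Tn i \<le> Tn j"
    using tenor dT by (simp add: mult_right_mono)
  define v where "v k = B0 k / B0 N" for k
  have v_dec: "\<And>i j. 1 \<le> i \<Longrightarrow> i < j \<Longrightarrow> j \<le> N \<Longrightarrow> v j < v i"
    unfolding v_def using positive_libor_bonds_decreasing[OF B0pos dT libor0] B0pos
    by (simp add: divide_strict_right_mono)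
  have vN: "v N = 1" using B0pos[rule_format, of N] by (simp add: v_def)
  show ?thesis
  proof (intro conjI impI allI ballI, goal_cases)
    case 1
    then show ?case
      using calibrated_parameters_exist[where v = v and N = N, OF aff x0 T v_dec vN] unfolding v_def by blast
  next
    case (2 u B k t)
    then show ?case
      by (intro libor_rates_positive[where N = N and Tn = Tn and u = u and B = B, OF aff x0 Tn_mono TN]) auto
  qed
qed

end
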